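(* Let $\lambda,\mu\in\mathbb{C}$ and integers $m,N_T\ge1$. Let $E_\Delta^F=I-A_c^{-1}A_S$ and $E_\Delta^{FCF}=(I-A_c^{-1}A_S)(I-A_S)$ with $A_c=\mathcal{B}_{N_T}(\mu)$, $A_S=\mathcal{B}_{N_T}(\lambda^m)$. Then $E_\Delta^F$ is the lower triangular Toeplitz matrix whose $(i,j)$ entry is $(\lambda^m-\mu)\mu^{i-j-1}$ for $i>j$ and $0$ otherwise, and $E_\Delta^{FCF}$ is the lower triangular Toeplitz matrix whose $(i,j)$ entry is $(\lambda^m-\mu)\lambda^m\mu^{i-j-2}$ for $i\ge j+2$ and $0$ otherwise. Moreover, for every integer $k\ge1$ with $k\le N_T$, $$\|(E_\Delta^F)^k\|_1=\|(E_\Delta^F)^k\|_\infty=|\lambda^m-\mu|^k\sum_{j=0}^{N_T-k}\binom{j+k-1}{j}|\mu|^j,$$ and for every integer $k\ge1$ with $2k\le N_T$, $$\|(E_\Delta^{FCF})^k\|_1=\|(E_\Delta^{FCF})^k\|_\infty=|\lambda^m-\mu|^k|\lambda|^{mk}\sum_{j=0}^{N_T-2k}\binom{j+k-1}{j}|\mu|^j.$$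
   Context: For a scalar $g$, $\mathcal{B}_{N_T}(g)$ denotes the $(N_T+1)\times(N_T+1)$ matrix (rows/columns indexed $0,\dots,N_T$) with ones on the diagonal, $-g$ on the first subdiagonal, and zeros elsewhere. $\|\cdot\|_1$ and $\|\cdot\|_\infty$ are the maximum absolute column sum and maximum absolute row sum matrix norms. *)

theory Defs
  imports Complex_Main "Jordan_Normal_Form.Matrix"
begin

definition bidiag_mat :: "nat \<Rightarrow> complex \<Rightarrow> complex mat" where
  "bidiag_mat NT g = mat (NT + 1) (NT + 1)
     (\<lambda>(i, j). if i = j then 1 else if i = j + 1 then - g else 0)"

definition mat_inv :: "complex mat \<Rightarrow> complex mat" where
  "mat_inv A = (THE B. B \<in> carrier_mat (dim_row A) (dim_row A) \<and> A * B = 1\<^sub>m (dim_row A)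
                      \<and> B * A = 1\<^sub>m (dim_row A))"

definition norm1_mat :: "complex mat \<Rightarrow> real" where
  "norm1_mat A = Max ((\<lambda>j. \<Sum>i<dim_row A. cmod (A $$ (i, j))) ` {..<dim_col A})"

definition norm_inf_mat :: "complex mat \<Rightarrow> real" where
  "norm_inf_mat A = Max ((\<lambda>i. \<Sum>j<dim_col A. cmod (A $$ (i, j))) ` {..<dim_row A})"

end

theory Submission imports Defs begin

text \<open>A lower triangular Toeplitz matrix of size n is a power series truncated at degree n:
  multiplication of such matrices is convolution of their symbols. Both iteration matrices are
  of this form, with symbols c \<mu>^(p-s) supported on p \<ge> s (s = 1 for F, s = 2 for FCF).
  The k-th convolution power of such a symbol is c^k \<mu>^(p-sk) times a negative binomial
  coefficient, by the hockey-stick identity. Finally, the column sums and row sums of a lower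
  triangular Toeplitz matrix are partial sums of the absolute symbol, so both norms equal the
  full sum, attained in the first column and in the last row.\<close>

definition toeplitz_lower :: "nat \<Rightarrow> (nat \<Rightarrow> 'a::zero) \<Rightarrow> 'a mat" where
  "toeplitz_lower n a = mat n n (\<lambda>(i, j). if j \<le> i then a (i - j) else 0)"

definition conv :: "(nat \<Rightarrow> 'a::comm_semiring_0) \<Rightarrow> (nat \<Rightarrow> 'a) \<Rightarrow> nat \<Rightarrow> 'a" where
  "conv a b p = (\<Sum>q\<le>p. a q * b (p - q))"

definition delta_seq :: "nat \<Rightarrow> 'a::{zero,one}" where
  "delta_seq p = (if p = 0 then 1 else 0)"

lemma sum_atMost_reflect: "(\<Sum>q\<le>(N::nat). f (N - q)) = (\<Sum>q\<le>N. (f q :: 'a::comm_monoid_add))"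
  by (rule sum.reindex_bij_witness[where i="\<lambda>q. N - q" and j="\<lambda>q. N - q"]) auto

lemma conv_commute: "conv a b = conv b a"
proof
  fix p
  have "conv a b p = (\<Sum>q\<le>p. a (p - q) * b (p - (p - q)))"
    unfolding conv_def by (rule sum_atMost_reflect[symmetric, where f="\<lambda>q. a q * b (p - q)"])
  also have "\<dots> = conv b a p"
    unfolding conv_def by (intro sum.cong) (auto simp: mult.commute)
  finally show "conv a b p = conv b a p" .
qed

lemma conv_delta_seq: "conv delta_seq a = (a :: nat \<Rightarrow> 'a::comm_semiring_1)"
proof
  fix p show "conv delta_seq a p = a p"
    unfolding conv_def delta_seq_def by (subst sum.atMost_shift) auto
qed

lemma conv_two_term:
  "conv (\<lambda>q. if q = 0 then x else if q = 1 then y else 0) a p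
     = (if p = 0 then x * a 0 else x * a p + y * a (p - 1))"
proof (cases p)
  case (Suc p')
  then show ?thesis
    by (cases p') (simp_all add: conv_def sum.atMost_Suc_shift del: sum.atMost_Suc)
qed (simp add: conv_def)

lemma toeplitz_lower_carrier [simp]: "toeplitz_lower n a \<in> carrier_mat n n"
  and dim_toeplitz_lower [simp]:
    "dim_row (toeplitz_lower n a) = n" "dim_col (toeplitz_lower n a) = n"
  by (simp_all add: toeplitz_lower_def)

lemma toeplitz_lower_mult_entry:
  assumes "i < n"
  shows "(\<Sum>l<n. (if l \<le> i then a (i - l) else 0) * (if j \<le> l then b (l - j) else 0))
           = (if j \<le> i then conv a b (i - j) else (0 :: 'a::comm_semiring_0))"
proof (cases "j \<le> i")
  case True
  have "(\<Sum>l<n. (if l \<le> i then a (i - l) else 0) * (if j \<le> l then b (l - j) else 0))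
          = (\<Sum>l\<in>{j..i}. a (i - l) * b (l - j))"
    using assms by (intro sum.mono_neutral_cong_right) auto
  also have "\<dots> = (\<Sum>q\<le>i - j. a q * b (i - j - q))"
    by (rule sum.reindex_bij_witness[where i="\<lambda>q. i - q" and j="\<lambda>l. i - l"]) (use True in auto)
  finally show ?thesis using True by (simp add: conv_def)
qed (auto intro: sum.neutral)

lemma toeplitz_lower_mult:
  "toeplitz_lower n a * toeplitz_lower n b = toeplitz_lower n (conv a (b :: nat \<Rightarrow> 'a::comm_semiring_0))"
  by (rule eq_matI)
     (auto simp: index_mult_mat scalar_prod_def atLeast0LessThan toeplitz_lower_mult_entry
                 toeplitz_lower_def)

lemma toeplitz_lower_minus:
  "toeplitz_lower n a - toeplitz_lower n b = toeplitz_lower n (\<lambda>p. a p - (b p :: 'a::group_add))"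
  by (rule eq_matI) (auto simp: toeplitz_lower_def)

lemma one_mat_toeplitz_lower: "1\<^sub>m n = toeplitz_lower n (delta_seq :: nat \<Rightarrow> 'a::{zero,one})"
  by (rule eq_matI) (auto simp: toeplitz_lower_def delta_seq_def)

lemma mat_inv_eqI:
  assumes A: "A \<in> carrier_mat n n" and B: "B \<in> carrier_mat n n"
    and AB: "A * B = 1\<^sub>m n" and BA: "B * A = 1\<^sub>m n"
  shows "mat_inv A = B"
  unfolding mat_inv_def
proof (rule the_equality)
  fix C
  assume "C \<in> carrier_mat (dim_row A) (dim_row A) \<and> A * C = 1\<^sub>m (dim_row A) \<and> C * A = 1\<^sub>m (dim_row A)"
  then have C: "C \<in> carrier_mat n n" and CA: "C * A = 1\<^sub>m n" using A by auto
  have "C = C * (A * B)" using AB C by simp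
  also have "\<dots> = (C * A) * B" using A B C by (simp add: assoc_mult_mat)
  finally show "C = B" using CA B by simp
qed (use A B AB BA in auto)

definition bidiag_symbol :: "'a::{uminus,zero,one} \<Rightarrow> nat \<Rightarrow> 'a" where
  "bidiag_symbol g q = (if q = 0 then 1 else if q = 1 then - g else 0)"

lemma bidiag_mat_toeplitz_lower: "bidiag_mat NT g = toeplitz_lower (NT + 1) (bidiag_symbol g)"
  by (rule eq_matI) (auto simp: bidiag_mat_def toeplitz_lower_def bidiag_symbol_def)

lemma mat_inv_bidiag_mat: "mat_inv (bidiag_mat NT g) = toeplitz_lower (NT + 1) (\<lambda>p. g ^ p)"
proof -
  have geometric: "conv (bidiag_symbol g) (\<lambda>p. g ^ p) = delta_seq"
  proof
    fix p show "conv (bidiag_symbol g) (\<lambda>p. g ^ p) p = delta_seq p"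
      unfolding bidiag_symbol_def conv_two_term by (cases p) (auto simp: delta_seq_def)
  qed
  show ?thesis
    unfolding bidiag_mat_toeplitz_lower
    by (rule mat_inv_eqI[where n="NT + 1"])
       (auto simp: toeplitz_lower_mult geometric one_mat_toeplitz_lower conv_commute[of "\<lambda>p. g ^ p"])
qed

definition shifted_geom :: "'a::comm_semiring_1 \<Rightarrow> 'a \<Rightarrow> nat \<Rightarrow> nat \<Rightarrow> 'a" where
  "shifted_geom c \<mu> s p = (if s \<le> p then c * \<mu> ^ (p - s) else 0)"

definition shifted_geom_power :: "'a::comm_semiring_1 \<Rightarrow> 'a \<Rightarrow> nat \<Rightarrow> nat \<Rightarrow> nat \<Rightarrow> 'a" where
  "shifted_geom_power c \<mu> s k p =
     (if s * k \<le> p then c ^ k * \<mu> ^ (p - s * k) * of_nat ((p - s * k + k - 1) choose (p - s * k))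
      else 0)"

lemma one_minus_inv_bidiag_mult_bidiag:
  fixes \<mu> L :: complex
  shows "1\<^sub>m (NT + 1) - mat_inv (bidiag_mat NT \<mu>) * bidiag_mat NT L
     = toeplitz_lower (NT + 1) (shifted_geom (L - \<mu>) \<mu> 1)"
proof -
  have "(\<lambda>p. delta_seq p - conv (bidiag_symbol L) (\<lambda>p. \<mu> ^ p) p) = shifted_geom (L - \<mu>) \<mu> 1"
  proof
    fix p show "delta_seq p - conv (bidiag_symbol L) (\<lambda>p. \<mu> ^ p) p = shifted_geom (L - \<mu>) \<mu> 1 p"
      unfolding bidiag_symbol_def conv_two_term
      by (cases p) (auto simp: delta_seq_def shifted_geom_def algebra_simps)
  qed
  then show ?thesis
    unfolding mat_inv_bidiag_mat unfolding bidiag_mat_toeplitz_lower one_mat_toeplitz_lower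
    by (simp add: toeplitz_lower_mult toeplitz_lower_minus conv_commute[of "\<lambda>p. \<mu> ^ p"])
qed

lemma one_minus_inv_bidiag_mult_bidiag_mult:
  fixes \<mu> L :: complex
  shows "(1\<^sub>m (NT + 1) - mat_inv (bidiag_mat NT \<mu>) * bidiag_mat NT L) * (1\<^sub>m (NT + 1) - bidiag_mat NT L)
     = toeplitz_lower (NT + 1) (shifted_geom ((L - \<mu>) * L) \<mu> 2)"
proof -
  define t :: "nat \<Rightarrow> complex" where "t q = (if q = 0 then 0 else if q = 1 then L else 0)" for q
  have "(\<lambda>p. delta_seq p - bidiag_symbol L p) = t"
    by (auto simp: delta_seq_def bidiag_symbol_def t_def)
  then have "1\<^sub>m (NT + 1) - bidiag_mat NT L = toeplitz_lower (NT + 1) t"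
    by (simp add: bidiag_mat_toeplitz_lower one_mat_toeplitz_lower toeplitz_lower_minus)
  moreover have "conv t (shifted_geom (L - \<mu>) \<mu> 1) = shifted_geom ((L - \<mu>) * L) \<mu> 2"
  proof
    fix p show "conv t (shifted_geom (L - \<mu>) \<mu> 1) p = shifted_geom ((L - \<mu>) * L) \<mu> 2 p"
      unfolding t_def conv_two_term
      by (cases p) (auto simp: shifted_geom_def algebra_simps numeral_2_eq_2)
  qed
  ultimately show ?thesis
    unfolding one_minus_inv_bidiag_mult_bidiag by (simp add: toeplitz_lower_mult conv_commute[of t])
qed

lemma sum_choose_lower_reflect:
  assumes "k \<ge> 1"
  shows "(\<Sum>r\<le>N. (N - r + k - 1) choose (N - r)) = (N + k) choose N"
proof -
  have "(\<Sum>r\<le>N. (N - r + k - 1) choose (N - r)) = (\<Sum>r\<le>N. (k - 1 + r) choose r)"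
    using sum_atMost_reflect[where f="\<lambda>r. (r + k - 1) choose r"] assms by (simp add: add.commute)
  also have "\<dots> = Suc (k - 1 + N) choose N"
    by (rule sum_choose_lower)
  finally show ?thesis using assms by (simp add: add.commute)
qed

lemma conv_shifted_geom_power:
  assumes k: "k \<ge> 1"
  shows "conv (shifted_geom c \<mu> s) (shifted_geom_power c \<mu> s k) p = shifted_geom_power c \<mu> s (Suc k) p"
proof (cases "s * Suc k \<le> p")
  case False
  have "shifted_geom c \<mu> s q * shifted_geom_power c \<mu> s k (p - q) = 0" if "q \<le> p" for q
    using False that by (auto simp: shifted_geom_def shifted_geom_power_def algebra_simps)
  then show ?thesis
    using False by (auto simp: conv_def shifted_geom_power_def intro: sum.neutral)
next
  case True
  define N where "N = p - s * Suc k"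
  have p: "p = N + s + s * k" using True by (simp add: N_def algebra_simps)
  have "conv (shifted_geom c \<mu> s) (shifted_geom_power c \<mu> s k) p
      = (\<Sum>q\<in>{s..s + N}. c * \<mu> ^ (q - s) * (c ^ k * \<mu> ^ (p - q - s * k) *
           of_nat ((p - q - s * k + k - 1) choose (p - q - s * k))))"
    unfolding conv_def
    by (intro sum.mono_neutral_cong_right) (auto simp: p shifted_geom_def shifted_geom_power_def)
  also have "\<dots> = (\<Sum>r\<le>N. c * \<mu> ^ r * (c ^ k * \<mu> ^ (N - r) * of_nat ((N - r + k - 1) choose (N - r))))"
    by (rule sum.reindex_bij_witness[where i="\<lambda>r. r + s" and j="\<lambda>q. q - s"]) (auto simp: p)
  also have "\<dots> = (\<Sum>r\<le>N. c ^ Suc k * \<mu> ^ N * of_nat ((N - r + k - 1) choose (N - r)))"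
  proof (intro sum.cong refl)
    fix r assume "r \<in> {..N}"
    then have "\<mu> ^ N = \<mu> ^ r * \<mu> ^ (N - r)" by (simp flip: power_add)
    then show "c * \<mu> ^ r * (c ^ k * \<mu> ^ (N - r) * of_nat ((N - r + k - 1) choose (N - r)))
        = c ^ Suc k * \<mu> ^ N * of_nat ((N - r + k - 1) choose (N - r))"
      by (simp add: mult_ac)
  qed
  also have "\<dots> = c ^ Suc k * \<mu> ^ N * of_nat (\<Sum>r\<le>N. (N - r + k - 1) choose (N - r))"
    by (simp add: sum_distrib_left)
  also have "(\<Sum>r\<le>N. (N - r + k - 1) choose (N - r)) = (N + k) choose N"
    using k by (rule sum_choose_lower_reflect)
  also have "c ^ Suc k * \<mu> ^ N * of_nat ((N + k) choose N) = shifted_geom_power c \<mu> s (Suc k) p"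
    using True by (simp add: shifted_geom_power_def N_def)
  finally show ?thesis .
qed

lemma toeplitz_lower_shifted_geom_power:
  assumes "k \<ge> 1"
  shows "toeplitz_lower n (shifted_geom c \<mu> s) ^\<^sub>m k = toeplitz_lower n (shifted_geom_power c \<mu> s k)"
  using assms
proof (induction k rule: dec_induct)
  case base
  have "shifted_geom c \<mu> s = shifted_geom_power c \<mu> s 1"
    by (auto simp: shifted_geom_def shifted_geom_power_def)
  then show ?case
    by (simp add: one_mat_toeplitz_lower toeplitz_lower_mult conv_delta_seq)
next
  case (step j)
  have "conv (shifted_geom c \<mu> s) (shifted_geom_power c \<mu> s j) = shifted_geom_power c \<mu> s (Suc j)"
    using step.hyps(1) by (intro ext conv_shifted_geom_power) simp
  with step.IH show ?case
    by (simp add: toeplitz_lower_mult conv_commute[of _ "shifted_geom c \<mu> s"])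
qed

lemma sum_if_le_shift:
  assumes "j \<le> (n::nat)"
  shows "(\<Sum>i<n. if j \<le> i then f (i - j) else 0) = (\<Sum>p<n - j. (f p :: 'a::comm_monoid_add))"
proof -
  have "(\<Sum>i<n. if j \<le> i then f (i - j) else 0) = (\<Sum>i\<in>{j..<n}. f (i - j))"
    by (intro sum.mono_neutral_cong_right) auto
  also have "\<dots> = (\<Sum>p<n - j. f p)"
    by (rule sum.reindex_bij_witness[where i="\<lambda>p. p + j" and j="\<lambda>i. i - j"]) auto
  finally show ?thesis .
qed

lemma norm1_mat_toeplitz_lower:
  assumes "n \<ge> 1"
  shows "norm1_mat (toeplitz_lower n a) = (\<Sum>p<n. cmod (a p))"
proof -
  have col: "(\<Sum>i<n. cmod (toeplitz_lower n a $$ (i, j))) = (\<Sum>p<n - j. cmod (a p))" if "j < n" for j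
  proof -
    have "(\<Sum>i<n. cmod (toeplitz_lower n a $$ (i, j))) = (\<Sum>i<n. if j \<le> i then cmod (a (i - j)) else 0)"
      using that by (intro sum.cong) (auto simp: toeplitz_lower_def)
    also have "\<dots> = (\<Sum>p<n - j. cmod (a p))" using that by (intro sum_if_le_shift) simp
    finally show ?thesis .
  qed
  have "norm1_mat (toeplitz_lower n a) = Max ((\<lambda>j. \<Sum>p<n - j. cmod (a p)) ` {..<n})"
    unfolding norm1_mat_def by (intro arg_cong[where f=Max] image_cong) (auto simp: col)
  also have "\<dots> = (\<Sum>p<n. cmod (a p))"
  proof (rule Max_eqI)
    show "(\<Sum>p<n. cmod (a p)) \<in> (\<lambda>j. \<Sum>p<n - j. cmod (a p)) ` {..<n}"
      using assms by (intro image_eqI[where x=0]) auto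
  qed (auto intro!: sum_mono2)
  finally show ?thesis .
qed

lemma norm_inf_mat_toeplitz_lower:
  assumes "n \<ge> 1"
  shows "norm_inf_mat (toeplitz_lower n a) = (\<Sum>p<n. cmod (a p))"
proof -
  have row: "(\<Sum>j<n. cmod (toeplitz_lower n a $$ (i, j))) = (\<Sum>p\<le>i. cmod (a p))" if "i < n" for i
  proof -
    have "(\<Sum>j<n. cmod (toeplitz_lower n a $$ (i, j))) = (\<Sum>j\<le>i. cmod (a (i - j)))"
      using that by (intro sum.mono_neutral_cong_right) (auto simp: toeplitz_lower_def)
    then show ?thesis by (simp add: sum_atMost_reflect[where f="\<lambda>p. cmod (a p)"])
  qed
  have "norm_inf_mat (toeplitz_lower n a) = Max ((\<lambda>i. \<Sum>p\<le>i. cmod (a p)) ` {..<n})"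
    unfolding norm_inf_mat_def by (intro arg_cong[where f=Max] image_cong) (auto simp: row)
  also have "\<dots> = (\<Sum>p<n. cmod (a p))"
  proof (rule Max_eqI)
    have "{..n - 1} = {..<n}" using assms by auto
    then show "(\<Sum>p<n. cmod (a p)) \<in> (\<lambda>i. \<Sum>p\<le>i. cmod (a p)) ` {..<n}"
      using assms by (intro image_eqI[where x="n - 1"]) auto
  qed (auto intro!: sum_mono2)
  finally show ?thesis .
qed

lemma sum_norm_shifted_geom_power:
  assumes "s * k \<le> NT"
  shows "(\<Sum>p<NT + 1. cmod (shifted_geom_power c \<mu> s k p))
           = cmod c ^ k * (\<Sum>j = 0..NT - s * k. real ((j + k - 1) choose j) * cmod \<mu> ^ j)"
proof -
  define f where "f j = cmod c ^ k * (real ((j + k - 1) choose j) * cmod \<mu> ^ j)" for j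
  have "(\<Sum>p<NT + 1. cmod (shifted_geom_power c \<mu> s k p))
          = (\<Sum>p<NT + 1. if s * k \<le> p then f (p - s * k) else 0)"
    by (intro sum.cong) (auto simp: shifted_geom_power_def f_def norm_mult norm_power)
  also have "\<dots> = (\<Sum>j<NT + 1 - s * k. f j)" using assms by (intro sum_if_le_shift) simp
  also have "{..<NT + 1 - s * k} = {0..NT - s * k}" using assms by auto
  finally show ?thesis by (simp add: f_def sum_distrib_left)
qed

lemma norms_toeplitz_lower_shifted_geom_power:
  fixes c \<mu> :: complex
  assumes "k \<ge> 1" and "s * k \<le> NT"
  defines "E \<equiv> toeplitz_lower (NT + 1) (shifted_geom c \<mu> s)"
  defines "v \<equiv> cmod c ^ k * (\<Sum>j = 0..NT - s * k. real ((j + k - 1) choose j) * cmod \<mu> ^ j)"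
  shows "norm1_mat (E ^\<^sub>m k) = v \<and> norm_inf_mat (E ^\<^sub>m k) = v"
  using assms sum_norm_shifted_geom_power[OF assms(2)]
  by (simp add: toeplitz_lower_shifted_geom_power norm1_mat_toeplitz_lower norm_inf_mat_toeplitz_lower)

theorem mainTheorem2:
  fixes lam mu :: complex and m NT :: nat
  assumes "m \<ge> 1" and "NT \<ge> 1"
  defines "Ac \<equiv> bidiag_mat NT mu"
      and "AS \<equiv> bidiag_mat NT (lam ^ m)"
  defines "EF \<equiv> 1\<^sub>m (NT + 1) - mat_inv Ac * AS"
  defines "EFCF \<equiv> (1\<^sub>m (NT + 1) - mat_inv Ac * AS) * (1\<^sub>m (NT + 1) - AS)"
  shows "EF = mat (NT + 1) (NT + 1)
            (\<lambda>(i, j). if i > j then (lam ^ m - mu) * mu ^ (i - j - 1) else 0) \<and>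
         EFCF = mat (NT + 1) (NT + 1)
            (\<lambda>(i, j). if i \<ge> j + 2 then (lam ^ m - mu) * lam ^ m * mu ^ (i - j - 2) else 0) \<and>
         (\<forall>k::nat. 1 \<le> k \<and> k \<le> NT \<longrightarrow>
           norm1_mat (EF ^\<^sub>m k) = cmod (lam ^ m - mu) ^ k *
              (\<Sum>j = 0..NT - k. real ((j + k - 1) choose j) * cmod mu ^ j) \<and>
           norm_inf_mat (EF ^\<^sub>m k) = cmod (lam ^ m - mu) ^ k *
              (\<Sum>j = 0..NT - k. real ((j + k - 1) choose j) * cmod mu ^ j)) \<and>
         (\<forall>k::nat. 1 \<le> k \<and> 2 * k \<le> NT \<longrightarrow>
           norm1_mat (EFCF ^\<^sub>m k) = cmod (lam ^ m - mu) ^ k * cmod lam ^ (m * k) *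
              (\<Sum>j = 0..NT - 2 * k. real ((j + k - 1) choose j) * cmod mu ^ j) \<and>
           norm_inf_mat (EFCF ^\<^sub>m k) = cmod (lam ^ m - mu) ^ k * cmod lam ^ (m * k) *
              (\<Sum>j = 0..NT - 2 * k. real ((j + k - 1) choose j) * cmod mu ^ j))"
proof -
  have EF: "EF = toeplitz_lower (NT + 1) (shifted_geom (lam ^ m - mu) mu 1)"
    unfolding EF_def Ac_def AS_def by (rule one_minus_inv_bidiag_mult_bidiag)
  have EFCF: "EFCF = toeplitz_lower (NT + 1) (shifted_geom ((lam ^ m - mu) * lam ^ m) mu 2)"
    unfolding EFCF_def Ac_def AS_def by (rule one_minus_inv_bidiag_mult_bidiag_mult)
  have norm_c: "cmod ((lam ^ m - mu) * lam ^ m) ^ k = cmod (lam ^ m - mu) ^ k * cmod lam ^ (m * k)"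
    for k by (simp add: norm_mult norm_power power_mult_distrib power_mult)
  show ?thesis
    using norms_toeplitz_lower_shifted_geom_power[where s=1 and NT=NT and c="lam ^ m - mu" and \<mu>=mu]
          norms_toeplitz_lower_shifted_geom_power[where s=2 and NT=NT and c="(lam ^ m - mu) * lam ^ m" and \<mu>=mu]
    unfolding EF EFCF norm_c
    by (auto intro!: eq_matI simp: toeplitz_lower_def shifted_geom_def)
qed

end
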